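(* Let $P$ be a finite poset and $J$ a connected, nonprincipal order ideal of $P$. Then $J$ is nearly principal if and only if (a) $J$ has exactly two maximal elements $j_1,j_2$, and (b) for every common lower bound $\ell<_Pj_1,j_2$, the open intervals $]\ell,j_1[$ and $]\ell,j_2[$ coincide.
   Context: An order ideal of $P$ is a downward-closed subset; it is connected if it is nonempty and its induced Hasse diagram is connected, and principal if it equals $P_{\le p}=\{q:q\le_Pp\}$ for some $p$. Two connected order ideals intersect nontrivially if they are neither disjoint nor nested. A connected nonprincipal order ideal $J$ is nearly principal if there is exactly one unordered pair $\{J_1,J_2\}$ of connected order ideals intersecting nontrivially with $J_1\cup J_2=J$. The open interval $]\ell,j[=\{p:\ell<_Pp<_Pj\}$. *)

theory Defs
  imports Main
begin

text \<open>A finite poset is represented as a finite carrier set P inside a type of class order,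
  with the induced order.\<close>

definition order_ideal :: "'a::order set \<Rightarrow> 'a set \<Rightarrow> bool" where
  "order_ideal P J \<longleftrightarrow> J \<subseteq> P \<and> (\<forall>x\<in>J. \<forall>y\<in>P. y \<le> x \<longrightarrow> y \<in> J)"

definition covers :: "'a::order set \<Rightarrow> 'a \<Rightarrow> 'a \<Rightarrow> bool" where
  "covers P x y \<longleftrightarrow> x \<in> P \<and> y \<in> P \<and> x < y \<and> \<not> (\<exists>z\<in>P. x < z \<and> z < y)"

definition hasse_edges :: "'a::order set \<Rightarrow> 'a set \<Rightarrow> ('a \<times> 'a) set" where
  "hasse_edges P J = {(a, b). a \<in> J \<and> b \<in> J \<and> (covers P a b \<or> covers P b a)}"

definition connected_ideal :: "'a::order set \<Rightarrow> 'a set \<Rightarrow> bool" where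
  "connected_ideal P J \<longleftrightarrow> order_ideal P J \<and> J \<noteq> {} \<and>
     (\<forall>x\<in>J. \<forall>y\<in>J. (x, y) \<in> (hasse_edges P J)\<^sup>*)"

definition principal_ideal :: "'a::order set \<Rightarrow> 'a set \<Rightarrow> bool" where
  "principal_ideal P J \<longleftrightarrow> (\<exists>p\<in>P. J = {q\<in>P. q \<le> p})"

definition intersect_nontrivially :: "'a set \<Rightarrow> 'a set \<Rightarrow> bool" where
  "intersect_nontrivially J1 J2 \<longleftrightarrow> J1 \<inter> J2 \<noteq> {} \<and> \<not> J1 \<subseteq> J2 \<and> \<not> J2 \<subseteq> J1"

definition nearly_principal :: "'a::order set \<Rightarrow> 'a set \<Rightarrow> bool" where
  "nearly_principal P J \<longleftrightarrow> connected_ideal P J \<and> \<not> principal_ideal P J \<and>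
     card {{J1, J2} | J1 J2. connected_ideal P J1 \<and> connected_ideal P J2 \<and>
                            intersect_nontrivially J1 J2 \<and> J1 \<union> J2 = J} = 1"

definition maximal_elems :: "'a::order set \<Rightarrow> 'a set" where
  "maximal_elems J = {j\<in>J. \<not> (\<exists>x\<in>J. j < x)}"

definition open_interval :: "'a::order set \<Rightarrow> 'a \<Rightarrow> 'a \<Rightarrow> 'a set" where
  "open_interval P l j = {p\<in>P. l < p \<and> p < j}"

end

theory Submission
  imports Defs
begin

text \<open>Call an unordered pair of nontrivially intersecting connected ideals with union \<open>J\<close> a
  splitting of \<open>J\<close>; write \<open>\<down>p\<close> for the principal ideal of \<open>p\<close> and \<open>\<down>S\<close> for the ideal generated
  by \<open>S\<close>, and \<open>M\<close> for the set of maximal elements of \<open>J\<close>, so that \<open>J = \<down>M\<close>.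
  If \<open>|M| \<ge> 3\<close>, growing a connected \<open>\<down>S\<close> one adjacent maximal element at a time yields two
  different \<open>m \<in> M\<close> for which \<open>\<down>(M - {m})\<close> is still connected, and each gives a splitting
  \<open>{\<down>m, \<down>(M - {m})}\<close>. If \<open>M = {a, b}\<close>, then \<open>{\<down>a, \<down>b}\<close> is a splitting, and a point
  \<open>p \<in> ]l,a[ - ]l,b[\<close> produces a second one, \<open>{\<down>a, \<down>b \<union> \<down>p}\<close>. Conversely, if the intervals
  agree, a connected ideal containing \<open>a\<close> but not \<open>b\<close> cannot leave \<open>\<down>a\<close>: the first Hasse
  edge from \<open>u \<in> \<down>a\<close> up to \<open>v \<notin> \<down>a\<close> would give \<open>v \<in> ]u,b[ = ]u,a[\<close>.\<close>

abbreviation down :: "'a::order set \<Rightarrow> 'a \<Rightarrow> 'a set" where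
  "down P p \<equiv> {q\<in>P. q \<le> p}"

abbreviation down_set :: "'a::order set \<Rightarrow> 'a set \<Rightarrow> 'a set" where
  "down_set P S \<equiv> {q\<in>P. \<exists>s\<in>S. q \<le> s}"

definition splittings :: "'a::order set \<Rightarrow> 'a set \<Rightarrow> 'a set set set" where
  "splittings P J = {{J1, J2} | J1 J2. connected_ideal P J1 \<and> connected_ideal P J2 \<and>
                       intersect_nontrivially J1 J2 \<and> J1 \<union> J2 = J}"

lemma nearly_principal_iff_card_splittings:
  "nearly_principal P J \<longleftrightarrow>
     connected_ideal P J \<and> \<not> principal_ideal P J \<and> card (splittings P J) = 1"
  by (simp add: nearly_principal_def splittings_def)

lemma splittingsI:
  assumes "connected_ideal P J1" "connected_ideal P J2" "intersect_nontrivially J1 J2"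
    "J1 \<union> J2 = J"
  shows "{J1, J2} \<in> splittings P J"
  using assms unfolding splittings_def by blast

lemma card_ne_1_if_two_elements: "x \<in> X \<Longrightarrow> y \<in> X \<Longrightarrow> x \<noteq> y \<Longrightarrow> card X \<noteq> 1"
  by (metis card_1_singletonE singletonD)

lemma order_ideal_down_set: "order_ideal P (down_set P S)"
  by (auto simp: order_ideal_def intro: order_trans)

lemma order_ideal_down: "order_ideal P (down P p)"
  by (auto simp: order_ideal_def intro: order_trans)

lemma down_subset_order_ideal: "order_ideal P K \<Longrightarrow> a \<in> K \<Longrightarrow> down P a \<subseteq> K"
  by (auto simp: order_ideal_def)

lemma hasse_edges_sym: "(x, y) \<in> hasse_edges P S \<Longrightarrow> (y, x) \<in> hasse_edges P S"
  by (auto simp: hasse_edges_def)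

lemma rtrancl_hasse_edges_sym:
  "(x, y) \<in> (hasse_edges P S)\<^sup>* \<Longrightarrow> (y, x) \<in> (hasse_edges P S)\<^sup>*"
  by (induction rule: rtrancl_induct) (auto intro: converse_rtrancl_into_rtrancl hasse_edges_sym)

lemma rtrancl_hasse_edges_mono:
  assumes "(x, y) \<in> (hasse_edges P S)\<^sup>*" "S \<subseteq> T"
  shows "(x, y) \<in> (hasse_edges P T)\<^sup>*"
proof -
  have "hasse_edges P S \<subseteq> hasse_edges P T"
    using \<open>S \<subseteq> T\<close> by (auto simp: hasse_edges_def)
  then show ?thesis using assms(1) rtrancl_mono by blast
qed

lemma rtrancl_exit_edge:
  "(a, b) \<in> R\<^sup>* \<Longrightarrow> a \<in> A \<Longrightarrow> b \<notin> A \<Longrightarrow> \<exists>u v. (u, v) \<in> R \<and> u \<in> A \<and> v \<notin> A"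
  by (induction rule: rtrancl_induct) blast+

lemma covers_between:
  assumes "finite P" "q \<in> P" "p \<in> P" "q < p"
  shows "\<exists>r\<in>P. covers P q r \<and> r \<le> p"
proof -
  let ?A = "{r\<in>P. q < r \<and> r \<le> p}"
  have "finite ?A" "?A \<noteq> {}" using assms by auto
  then obtain r where r: "r \<in> ?A" and min: "\<forall>b\<in>?A. b \<le> r \<longrightarrow> r = b"
    using finite_has_minimal by blast
  have "\<not> (\<exists>z\<in>P. q < z \<and> z < r)"
  proof
    assume "\<exists>z\<in>P. q < z \<and> z < r"
    then obtain z where "z \<in> P" "q < z" "z < r" by blast
    with r min show False by fastforce
  qed
  then show ?thesis using r assms by (auto simp: covers_def)
qed

lemma rtrancl_hasse_edges_if_le:
  assumes "finite P" "p \<in> P" "q \<in> P" "q \<le> p" "{r\<in>P. q \<le> r \<and> r \<le> p} \<subseteq> S"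
  shows "(q, p) \<in> (hasse_edges P S)\<^sup>*"
  using assms
proof (induction "card {r\<in>P. q < r \<and> r \<le> p}" arbitrary: q rule: less_induct)
  case less
  show ?case
  proof (cases "q = p")
    case False
    then have "q < p" using less by simp
    then obtain r where r: "r \<in> P" "covers P q r" "r \<le> p"
      using covers_between less.prems by blast
    have qr: "q < r" using r by (simp add: covers_def)
    have "{r'\<in>P. r < r' \<and> r' \<le> p} \<subset> {r'\<in>P. q < r' \<and> r' \<le> p}"
      using qr r by (auto intro: less_trans)
    then have "card {r'\<in>P. r < r' \<and> r' \<le> p} < card {r'\<in>P. q < r' \<and> r' \<le> p}"
      using less.prems(1) by (intro psubset_card_mono) auto
    moreover have "{r'\<in>P. r \<le> r' \<and> r' \<le> p} \<subseteq> S"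
      using less.prems(5) qr by (auto intro: less_le_trans)
    ultimately have "(r, p) \<in> (hasse_edges P S)\<^sup>*" using less.hyps less.prems r by blast
    moreover have "(q, r) \<in> hasse_edges P S"
      using r less.prems qr by (auto simp: hasse_edges_def)
    ultimately show ?thesis by (meson converse_rtrancl_into_rtrancl)
  qed simp
qed

lemma connected_ideal_down:
  assumes "finite P" "p \<in> P"
  shows "connected_ideal P (down P p)"
proof -
  have to_top: "(x, p) \<in> (hasse_edges P (down P p))\<^sup>*" if "x \<in> down P p" for x
    using that assms by (intro rtrancl_hasse_edges_if_le) auto
  have "(x, y) \<in> (hasse_edges P (down P p))\<^sup>*" if "x \<in> down P p" "y \<in> down P p" for x y
    using to_top[OF that(1)] rtrancl_hasse_edges_sym[OF to_top[OF that(2)]]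
    by (rule rtrancl_trans)
  then show ?thesis
    using assms order_ideal_down by (auto simp: connected_ideal_def)
qed

lemma connected_ideal_Un:
  assumes A: "connected_ideal P A" and B: "connected_ideal P B" and z: "z \<in> A \<inter> B"
  shows "connected_ideal P (A \<union> B)"
proof -
  have to_z: "(x, z) \<in> (hasse_edges P (A \<union> B))\<^sup>*" if "x \<in> A \<union> B" for x
  proof -
    have "(x, z) \<in> (hasse_edges P A)\<^sup>* \<or> (x, z) \<in> (hasse_edges P B)\<^sup>*"
      using that A B z by (auto simp: connected_ideal_def)
    then show ?thesis using rtrancl_hasse_edges_mono by blast
  qed
  have "(x, y) \<in> (hasse_edges P (A \<union> B))\<^sup>*" if "x \<in> A \<union> B" "y \<in> A \<union> B" for x y
    using to_z[OF that(1)] rtrancl_hasse_edges_sym[OF to_z[OF that(2)]] by (rule rtrancl_trans)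
  moreover have "order_ideal P (A \<union> B)"
    using A B unfolding connected_ideal_def order_ideal_def by auto
  ultimately show ?thesis using z unfolding connected_ideal_def by blast
qed

lemma connected_ideal_cover_overlap:
  assumes J: "connected_ideal P J" and A: "order_ideal P A" and B: "order_ideal P B"
    and "A \<union> B = J" "A \<noteq> {}" "B \<noteq> {}"
  shows "A \<inter> B \<noteq> {}"
proof
  assume disj: "A \<inter> B = {}"
  obtain a b where "a \<in> A" "b \<in> B" using assms by blast
  then have "(a, b) \<in> (hasse_edges P J)\<^sup>*" "b \<notin> A"
    using assms disj by (auto simp: connected_ideal_def)
  then obtain u v where uv: "(u, v) \<in> hasse_edges P J" "u \<in> A" "v \<notin> A"
    using rtrancl_exit_edge \<open>a \<in> A\<close> by metis
  then have "v \<in> B" "u \<in> P" "v \<in> P" "u \<le> v \<or> v \<le> u"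
    using assms by (auto simp: hasse_edges_def covers_def)
  then have "u \<in> B \<or> v \<in> A"
    using uv A B unfolding order_ideal_def by blast
  then show False using uv disj by blast
qed

locale finite_connected_ideal =
  fixes P J :: "'a::order set"
  assumes finite_P: "finite P" and connected: "connected_ideal P J"
begin

lemma order_ideal: "order_ideal P J"
  using connected by (simp add: connected_ideal_def)

lemma subset_P: "J \<subseteq> P"
  using order_ideal by (simp add: order_ideal_def)

lemma finite_J: "finite J"
  using finite_P subset_P finite_subset by blast

lemma maximal_elems_subset: "maximal_elems J \<subseteq> J"
  by (auto simp: maximal_elems_def)

lemma maximal_in_P: "m \<in> maximal_elems J \<Longrightarrow> m \<in> P"
  using maximal_elems_subset subset_P by blast

lemma finite_maximal_elems: "finite (maximal_elems J)"
  using finite_J maximal_elems_subset finite_subset by blast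

lemma maximal_eq_if_le: "m \<in> maximal_elems J \<Longrightarrow> m' \<in> maximal_elems J \<Longrightarrow> m \<le> m' \<Longrightarrow> m' = m"
  by (auto simp: maximal_elems_def less_le)

lemma down_set_maximal_elems: "down_set P (maximal_elems J) = J"
proof
  show "down_set P (maximal_elems J) \<subseteq> J"
    using maximal_elems_subset order_ideal by (auto simp: order_ideal_def)
  have "\<exists>m\<in>maximal_elems J. x \<le> m" if "x \<in> J" for x
    using finite_has_maximal2[OF finite_J that] by (auto simp: maximal_elems_def less_le)
  then show "J \<subseteq> down_set P (maximal_elems J)"
    using subset_P by blast
qed

lemma down_set_inj_on_maximal:
  assumes "S \<subseteq> maximal_elems J" "T \<subseteq> maximal_elems J" "down_set P S = down_set P T"
  shows "S = T"
proof -
  have sub: "S \<subseteq> T" if "S \<subseteq> maximal_elems J" "T \<subseteq> maximal_elems J" "down_set P S = down_set P T"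
    for S T
  proof
    fix s assume "s \<in> S"
    then have "s \<in> down_set P T" using that maximal_in_P by blast
    then obtain t where "t \<in> T" "s \<le> t" by blast
    then show "s \<in> T" using maximal_eq_if_le \<open>s \<in> S\<close> that by blast
  qed
  show ?thesis
    using sub[OF assms] sub[OF assms(2,1) assms(3)[symmetric]] by (rule subset_antisym)
qed

lemma maximal_elems_not_singleton:
  assumes "\<not> principal_ideal P J"
  shows "maximal_elems J \<noteq> {m}"
proof
  assume M: "maximal_elems J = {m}"
  have "down_set P {m} = J"
    using down_set_maximal_elems by (simp only: M)
  moreover have "m \<in> P" using maximal_in_P M by simp
  ultimately show False
    using assms unfolding principal_ideal_def by force
qed

lemma exists_maximal_meeting_down_set:
  assumes "S \<subseteq> maximal_elems J" "S \<noteq> {}" "S \<noteq> maximal_elems J"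
  shows "\<exists>t\<in>maximal_elems J - S. down P t \<inter> down_set P S \<noteq> {}"
proof (rule ccontr)
  assume none: "\<not> ?thesis"
  let ?T = "maximal_elems J - S"
  have "down_set P S \<union> down_set P ?T = down_set P (maximal_elems J)"
    using assms(1) by blast
  then have "down_set P S \<union> down_set P ?T = J"
    by (simp only: down_set_maximal_elems)
  moreover have "down_set P S \<noteq> {}" "down_set P ?T \<noteq> {}"
    using assms maximal_in_P by blast+
  ultimately have "down_set P S \<inter> down_set P ?T \<noteq> {}"
    using connected_ideal_cover_overlap[OF connected order_ideal_down_set order_ideal_down_set]
    by blast
  then show False using none by blast
qed

lemma exists_non_cut_maximal:
  assumes "S \<subseteq> maximal_elems J" "S \<noteq> {}" "S \<noteq> maximal_elems J"
    "connected_ideal P (down_set P S)"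
  shows "\<exists>m\<in>maximal_elems J - S. connected_ideal P (down_set P (maximal_elems J - {m}))"
  using assms
proof (induction "card (maximal_elems J - S)" arbitrary: S rule: less_induct)
  case less
  obtain t where t: "t \<in> maximal_elems J - S" and meet: "down P t \<inter> down_set P S \<noteq> {}"
    using exists_maximal_meeting_down_set[OF less.prems(1-3)] by blast
  have "connected_ideal P (down P t \<union> down_set P S)"
    using connected_ideal_Un[OF connected_ideal_down[OF finite_P] less.prems(4)] meet t maximal_in_P
    by blast
  moreover have "down P t \<union> down_set P S = down_set P (insert t S)" by auto
  ultimately have conn: "connected_ideal P (down_set P (insert t S))" by simp
  show ?case
  proof (cases "insert t S = maximal_elems J")
    case True
    then have "maximal_elems J - {t} = S" using t by blast
    then have "connected_ideal P (down_set P (maximal_elems J - {t}))"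
      by (simp only: less.prems(4))
    then show ?thesis using t by blast
  next
    case False
    have "card ((maximal_elems J - S) - {t}) < card (maximal_elems J - S)"
      using t finite_maximal_elems by (intro card_Diff1_less) auto
    moreover have "maximal_elems J - insert t S = (maximal_elems J - S) - {t}" by blast
    ultimately have smaller: "card (maximal_elems J - insert t S) < card (maximal_elems J - S)"
      by simp
    have "insert t S \<subseteq> maximal_elems J" using t less.prems(1) by blast
    from less.hyps[OF smaller this _ False conn] show ?thesis by blast
  qed
qed

lemma splitting_at_maximal:
  assumes m: "m \<in> maximal_elems J" and not_only: "maximal_elems J \<noteq> {m}"
    and conn: "connected_ideal P (down_set P (maximal_elems J - {m}))"
  shows "{down P m, down_set P (maximal_elems J - {m})} \<in> splittings P J"
proof (rule splittingsI[OF connected_ideal_down[OF finite_P maximal_in_P[OF m]] conn])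
  let ?A = "down P m" and ?B = "down_set P (maximal_elems J - {m})"
  have "?A \<union> ?B = down_set P (maximal_elems J)" using m by blast
  then show union: "?A \<union> ?B = J" by (simp only: down_set_maximal_elems)
  obtain m' where m': "m' \<in> maximal_elems J" "m' \<noteq> m" using m not_only by blast
  have "m \<in> ?A" "m' \<in> ?B" using m m' maximal_in_P by auto
  moreover have "m \<notin> ?B" "m' \<notin> ?A" using m m' maximal_eq_if_le by blast+
  moreover have "?A \<inter> ?B \<noteq> {}"
    using connected_ideal_cover_overlap[OF connected order_ideal_down order_ideal_down_set union]
      calculation by blast
  ultimately show "intersect_nontrivially ?A ?B"
    unfolding intersect_nontrivially_def by blast
qed

lemma two_maximal_elems_if_card_splittings:
  assumes "card (splittings P J) = 1" "\<not> principal_ideal P J"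
  shows "\<exists>a b. a \<noteq> b \<and> maximal_elems J = {a, b}"
proof (rule ccontr)
  assume not_two: "\<not> ?thesis"
  have not_one: "maximal_elems J \<noteq> {m}" for m
    using maximal_elems_not_singleton assms(2) .
  have non_cut: "\<exists>m\<in>maximal_elems J - {m0}. connected_ideal P (down_set P (maximal_elems J - {m}))"
    if "m0 \<in> maximal_elems J" for m0
    using exists_non_cut_maximal[of "{m0}"] that not_one[of m0]
      connected_ideal_down[OF finite_P maximal_in_P[OF that]]
    by auto
  have "J \<noteq> {}" using connected by (simp add: connected_ideal_def)
  then obtain j where "j \<in> maximal_elems J"
    using down_set_maximal_elems by blast
  then obtain m1 where m1: "m1 \<in> maximal_elems J"
    and conn1: "connected_ideal P (down_set P (maximal_elems J - {m1}))"
    using non_cut by blast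
  then obtain m2 where m2: "m2 \<in> maximal_elems J" "m2 \<noteq> m1"
    and conn2: "connected_ideal P (down_set P (maximal_elems J - {m2}))"
    using non_cut by blast
  have "{down P m1, down_set P (maximal_elems J - {m1})}
      \<noteq> {down P m2, down_set P (maximal_elems J - {m2})}"
  proof
    assume "{down P m1, down_set P (maximal_elems J - {m1})}
      = {down P m2, down_set P (maximal_elems J - {m2})}"
    then consider "down P m1 = down P m2" | "down P m1 = down_set P (maximal_elems J - {m2})"
      by (simp only: doubleton_eq_iff) argo
    then show False
    proof cases
      case 1
      then have "{m1} = {m2}"
        using down_set_inj_on_maximal[of "{m1}" "{m2}"] m1 m2(1) by simp
      then show False using m2(2) by simp
    next
      case 2
      then have "{m1} = maximal_elems J - {m2}"
        using down_set_inj_on_maximal[of "{m1}" "maximal_elems J - {m2}"] m1 by simp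
      then show False using m1 m2 not_two by blast
    qed
  qed
  with splitting_at_maximal[OF m1 not_one conn1] splitting_at_maximal[OF m2(1) not_one conn2]
  have "card (splittings P J) \<noteq> 1"
    by (rule card_ne_1_if_two_elements)
  then show False using assms(1) by contradiction
qed


lemma down_Un_down_eq_if_maximal_elems_eq:
  "maximal_elems J = {a, b} \<Longrightarrow> down P a \<union> down P b = J"
  using down_set_maximal_elems by auto

lemma splitting_two_maximal:
  assumes M: "maximal_elems J = {a, b}" and "a \<noteq> b"
  shows "{down P a, down P b} \<in> splittings P J"
proof -
  have a: "a \<in> maximal_elems J" and not_only: "maximal_elems J \<noteq> {a}"
    using M \<open>a \<noteq> b\<close> by auto
  have rest: "maximal_elems J - {a} = {b}" using M \<open>a \<noteq> b\<close> by auto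
  have "connected_ideal P (down P b)"
    using connected_ideal_down[OF finite_P] maximal_in_P M by simp
  then have "connected_ideal P (down_set P (maximal_elems J - {a}))"
    unfolding rest by simp
  from splitting_at_maximal[OF a not_only this] show ?thesis
    unfolding rest by simp
qed

lemma splitting_through_open_interval:
  assumes M: "maximal_elems J = {a, b}" and "a \<noteq> b"
    and l: "l \<in> P" "l < a" "l < b"
    and p: "p \<in> open_interval P l a" "p \<notin> open_interval P l b"
  shows "{down P a, down P b \<union> down P p} \<in> splittings P J"
    and "{down P a, down P b \<union> down P p} \<noteq> {down P a, down P b}"
proof -
  have aM: "a \<in> maximal_elems J" and bM: "b \<in> maximal_elems J" using M by auto
  have "p \<in> P" "l < p" "p < a" "\<not> p < b" using p l by (auto simp: open_interval_def)
  have "\<not> a \<le> b" "\<not> b \<le> a" using maximal_eq_if_le aM bM \<open>a \<noteq> b\<close> by blast+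
  let ?K = "down P b \<union> down P p"
  have "connected_ideal P ?K"
    using connected_ideal_Un[OF connected_ideal_down[OF finite_P maximal_in_P[OF bM]]
        connected_ideal_down[OF finite_P \<open>p \<in> P\<close>], of l] l \<open>l < p\<close>
    by (auto intro: less_imp_le)
  moreover have "down P a \<union> ?K = J"
  proof -
    have "q \<le> a" if "q \<le> p" for q
      using that \<open>p < a\<close> by (meson le_less_trans less_imp_le)
    then have "down P a \<union> ?K = down P a \<union> down P b" by auto
    then show ?thesis by (simp only: down_Un_down_eq_if_maximal_elems_eq[OF M])
  qed
  moreover have "intersect_nontrivially (down P a) ?K"
  proof -
    have "l \<in> down P a \<inter> ?K" using l by (simp add: less_imp_le)
    moreover have "a \<in> down P a" "a \<notin> ?K"
      using maximal_in_P[OF aM] \<open>\<not> a \<le> b\<close> \<open>p < a\<close> by auto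
    moreover have "b \<in> ?K" "b \<notin> down P a"
      using maximal_in_P[OF bM] \<open>\<not> b \<le> a\<close> by auto
    ultimately show ?thesis unfolding intersect_nontrivially_def by blast
  qed
  ultimately show "{down P a, ?K} \<in> splittings P J"
    using splittingsI connected_ideal_down[OF finite_P maximal_in_P[OF aM]] by blast
  have "b \<in> ?K" "b \<notin> down P a" using maximal_in_P[OF bM] \<open>\<not> b \<le> a\<close> by auto
  then have "?K \<noteq> down P a" by blast
  moreover have "p \<notin> down P b" using \<open>\<not> p < b\<close> \<open>p < a\<close> \<open>\<not> b \<le> a\<close> by (auto simp: less_le)
  then have "?K \<noteq> down P b" using \<open>p \<in> P\<close> by blast
  ultimately show "{down P a, ?K} \<noteq> {down P a, down P b}"
    by (simp only: doubleton_eq_iff) argo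
qed

lemma connected_subideal_eq_down:
  assumes M: "maximal_elems J = {a, b}" and "a \<noteq> b"
    and intervals: "\<forall>l\<in>P. l < a \<and> l < b \<longrightarrow> open_interval P l a = open_interval P l b"
    and K: "connected_ideal P K" "K \<subseteq> J" "a \<in> K" "b \<notin> K"
  shows "K = down P a"
proof
  have aM: "a \<in> maximal_elems J" and bM: "b \<in> maximal_elems J" using M by auto
  show "down P a \<subseteq> K"
    using K(1) by (intro down_subset_order_ideal K(3)) (simp add: connected_ideal_def)
  show "K \<subseteq> down P a"
  proof
    fix x assume "x \<in> K"
    show "x \<in> down P a"
    proof (rule ccontr)
      assume "x \<notin> down P a"
      have "(a, x) \<in> (hasse_edges P K)\<^sup>*" "a \<in> down P a"
        using K \<open>x \<in> K\<close> maximal_in_P[OF aM] by (simp_all add: connected_ideal_def)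
      from rtrancl_exit_edge[OF this \<open>x \<notin> down P a\<close>]
      obtain u v where uv: "(u, v) \<in> hasse_edges P K" "u \<in> down P a" "v \<notin> down P a"
        by blast
      have "v \<in> K" "v \<in> P" "u \<in> P" "covers P u v \<or> covers P v u"
        using uv(1) by (auto simp: hasse_edges_def covers_def)
      have "v \<in> down P a \<union> down P b"
        using K(2) \<open>v \<in> K\<close> by (simp only: down_Un_down_eq_if_maximal_elems_eq[OF M]) blast
      then have "v \<in> down P b" using uv(3) by blast
      then have "v < b" using \<open>v \<in> K\<close> K(4) by (auto simp: less_le)
      have "u \<le> a" using uv(2) by simp
      have "\<not> v \<le> a" using uv(3) \<open>v \<in> P\<close> by simp
      then have "u < v"
        using \<open>covers P u v \<or> covers P v u\<close> \<open>u \<le> a\<close>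
        unfolding covers_def by (meson less_imp_le order_trans)
      then have "u < b" using \<open>v < b\<close> by (rule less_trans)
      moreover have "u \<noteq> a"
        using \<open>u < b\<close> maximal_eq_if_le[OF aM bM] \<open>a \<noteq> b\<close> by (metis less_imp_le)
      then have "u < a" using \<open>u \<le> a\<close> by simp
      ultimately have "open_interval P u b = open_interval P u a"
        using intervals \<open>u \<in> P\<close> by simp
      moreover have "v \<in> open_interval P u b"
        using \<open>v \<in> P\<close> \<open>u < v\<close> \<open>v < b\<close> by (simp add: open_interval_def)
      ultimately show False
        using \<open>\<not> v \<le> a\<close> by (simp add: open_interval_def less_imp_le)
    qed
  qed
qed

lemma open_interval_subset_if_card_splittings:
  assumes one: "card (splittings P J) = 1" and M: "maximal_elems J = {a, b}" and "a \<noteq> b"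
    and l: "l \<in> P" "l < a" "l < b"
  shows "open_interval P l a \<subseteq> open_interval P l b"
proof
  fix p assume p: "p \<in> open_interval P l a"
  show "p \<in> open_interval P l b"
  proof (rule ccontr)
    assume "p \<notin> open_interval P l b"
    note second = splitting_through_open_interval[OF M \<open>a \<noteq> b\<close> l p this]
    from splitting_two_maximal[OF M \<open>a \<noteq> b\<close>] second(1) second(2)[symmetric]
    have "card (splittings P J) \<noteq> 1" by (rule card_ne_1_if_two_elements)
    then show False using one by contradiction
  qed
qed

lemma open_intervals_eq_if_card_splittings:
  assumes one: "card (splittings P J) = 1" and M: "maximal_elems J = {a, b}" and "a \<noteq> b"
  shows "\<forall>l\<in>P. l < a \<and> l < b \<longrightarrow> open_interval P l a = open_interval P l b"
proof (intro ballI impI)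
  fix l assume l: "l \<in> P" "l < a \<and> l < b"
  have M': "maximal_elems J = {b, a}" using M by (simp add: insert_commute)
  show "open_interval P l a = open_interval P l b"
  proof (rule subset_antisym)
    show "open_interval P l a \<subseteq> open_interval P l b"
      using open_interval_subset_if_card_splittings[OF one M \<open>a \<noteq> b\<close>] l by blast
    show "open_interval P l b \<subseteq> open_interval P l a"
      using open_interval_subset_if_card_splittings[OF one M' \<open>a \<noteq> b\<close>[symmetric]] l by blast
  qed
qed

lemma splittings_eq_if_open_intervals_eq:
  assumes M: "maximal_elems J = {a, b}" and "a \<noteq> b"
    and intervals: "\<forall>l\<in>P. l < a \<and> l < b \<longrightarrow> open_interval P l a = open_interval P l b"
  shows "splittings P J = {{down P a, down P b}}"
proof
  show "{{down P a, down P b}} \<subseteq> splittings P J"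
    using splitting_two_maximal[OF M \<open>a \<noteq> b\<close>] by simp
  show "splittings P J \<subseteq> {{down P a, down P b}}"
  proof
    fix X assume "X \<in> splittings P J"
    then obtain K1 K2 where X: "X = {K1, K2}" and conn: "connected_ideal P K1" "connected_ideal P K2"
      and nontriv: "intersect_nontrivially K1 K2" and union: "K1 \<union> K2 = J"
      unfolding splittings_def by blast
    have M': "maximal_elems J = {b, a}" using M by (simp add: insert_commute)
    have intervals': "\<forall>l\<in>P. l < b \<and> l < a \<longrightarrow> open_interval P l b = open_interval P l a"
      using intervals by auto
    have "K1 \<subseteq> J" "K2 \<subseteq> J" using union by auto
    have "a \<in> J" "b \<in> J" using M maximal_elems_subset by auto
    have not_both: "\<not> (a \<in> K \<and> b \<in> K)" if "connected_ideal P K" "K = K1 \<or> K = K2" for K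
    proof
      assume "a \<in> K \<and> b \<in> K"
      moreover have "order_ideal P K" using that(1) by (simp add: connected_ideal_def)
      ultimately have "down P a \<union> down P b \<subseteq> K" by (simp add: down_subset_order_ideal)
      then have "J \<subseteq> K" by (simp only: down_Un_down_eq_if_maximal_elems_eq[OF M])
      then show False
        using that(2) \<open>K1 \<subseteq> J\<close> \<open>K2 \<subseteq> J\<close> nontriv unfolding intersect_nontrivially_def
        by (metis subset_trans)
    qed
    consider "a \<in> K1" "b \<notin> K1" "b \<in> K2" "a \<notin> K2" | "a \<in> K2" "b \<notin> K2" "b \<in> K1" "a \<notin> K1"
      using not_both[OF conn(1)] not_both[OF conn(2)] \<open>a \<in> J\<close> \<open>b \<in> J\<close> union by blast
    then show "X \<in> {{down P a, down P b}}"
    proof cases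
      case 1
      then have "K1 = down P a" "K2 = down P b"
        using connected_subideal_eq_down[OF M \<open>a \<noteq> b\<close> intervals conn(1) \<open>K1 \<subseteq> J\<close>]
          connected_subideal_eq_down[OF M' \<open>a \<noteq> b\<close>[symmetric] intervals' conn(2) \<open>K2 \<subseteq> J\<close>]
        by simp_all
      then show ?thesis using X by simp
    next
      case 2
      then have "K2 = down P a" "K1 = down P b"
        using connected_subideal_eq_down[OF M \<open>a \<noteq> b\<close> intervals conn(2) \<open>K2 \<subseteq> J\<close>]
          connected_subideal_eq_down[OF M' \<open>a \<noteq> b\<close>[symmetric] intervals' conn(1) \<open>K1 \<subseteq> J\<close>]
        by simp_all
      then show ?thesis using X by (simp add: insert_commute)
    qed
  qed
qed

end

theorem proposition10p4:
  fixes P J :: "'a::order set"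
  assumes "finite P"
    and "connected_ideal P J"
    and "\<not> principal_ideal P J"
  shows "nearly_principal P J \<longleftrightarrow>
    (\<exists>j1 j2. j1 \<noteq> j2 \<and> maximal_elems J = {j1, j2} \<and>
       (\<forall>l\<in>P. l < j1 \<and> l < j2 \<longrightarrow> open_interval P l j1 = open_interval P l j2))"
proof -
  interpret finite_connected_ideal P J
    using assms(1,2) by unfold_locales
  show ?thesis
  proof
    assume "nearly_principal P J"
    then have one: "card (splittings P J) = 1"
      by (simp add: nearly_principal_iff_card_splittings)
    obtain a b where "a \<noteq> b" "maximal_elems J = {a, b}"
      using two_maximal_elems_if_card_splittings[OF one assms(3)] by blast
    with open_intervals_eq_if_card_splittings[OF one] show "\<exists>j1 j2. j1 \<noteq> j2 \<and>
        maximal_elems J = {j1, j2} \<and>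
        (\<forall>l\<in>P. l < j1 \<and> l < j2 \<longrightarrow> open_interval P l j1 = open_interval P l j2)"
      by blast
  next
    assume "\<exists>j1 j2. j1 \<noteq> j2 \<and> maximal_elems J = {j1, j2} \<and>
        (\<forall>l\<in>P. l < j1 \<and> l < j2 \<longrightarrow> open_interval P l j1 = open_interval P l j2)"
    then obtain a b where "a \<noteq> b" "maximal_elems J = {a, b}"
      "\<forall>l\<in>P. l < a \<and> l < b \<longrightarrow> open_interval P l a = open_interval P l b"
      by blast
    then have "splittings P J = {{down P a, down P b}}"
      using splittings_eq_if_open_intervals_eq by blast
    then show "nearly_principal P J"
      using assms(2,3) by (simp add: nearly_principal_iff_card_splittings)
  qed
qed

end
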